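(* Let $\mathbb{K}$ be a field of characteristic $2$, let $(A,\cdot,\{-,-\},(-)^{\{2\}})$ be a restricted Poisson algebra, and let $n\ge0$. For every $(\varphi,\omega)\in C^n_{\rm PA}(A)$ we have $\mathrm{d}^n_{\rm PA}(\varphi,\omega)\in C^{n+1}_{\rm PA}(A)$; consequently $\big(\bigoplus_{n\ge0}C^n_{\rm PA}(A),\mathrm{d}^n_{\rm PA}\big)$ is a cochain complex.
   Context: $\mathbb{K}$ has characteristic $2$. Restricted Poisson algebra: commutative associative (not necessarily unital) $(A,\cdot)$ with Lie bracket $\{-,-\}$ satisfying $\{ab,c\}=a\{b,c\}+b\{a,c\}$, and a map $(-)^{\{2\}}$ such that $(\lambda x)^{\{2\}}=\lambda^2x^{\{2\}}$, $\mathrm{ad}_{x^{\{2\}}}=\mathrm{ad}_x^2$, $(x+y)^{\{2\}}=x^{\{2\}}+y^{\{2\}}+\{x,y\}$, and $(xy)^{\{2\}}=x^2y^{\{2\}}+y^2x^{\{2\}}+xy\{x,y\}$. $\mathfrak{X}^k(A)$: alternating $k$-linear maps $A^k\to A$ that are derivations of $\cdot$ in each argument. $C^0_{\rm PA}(A)=A$, $C^1_{\rm PA}(A)=\mathfrak{X}^1(A)$; for $n\ge2$, $C^n_{\rm PA}(A)$ consists of pairs $(\varphi,\omega)$ with $\varphi\in\mathfrak{X}^n(A)$ and $\omega:A\times A^{n-2}\to A$ alternating and multilinear in its last $n-2$ arguments, such that (with $z=(z_2,\dots,z_{n-1})$): $\omega(\lambda x,z)=\lambda^2\omega(x,z)$;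 $\omega(x+y,z)=\omega(x,z)+\omega(y,z)+\varphi(x,y,z)$; $\omega(xy,z)=x^2\omega(y,z)+y^2\omega(x,z)+xy\varphi(x,y,z)$; $\omega(x,z_2,..,z_iz_i',..,z_{n-1})=z_i\omega(x,..,z_i',..)+z_i'\omega(x,..,z_i,..)$. Differentials (with $x\cdot m=\{x,m\}$): $\mathrm{d}^0(a)(x)=\{x,a\}$; $\mathrm{d}^1\psi=(\mathrm{d}_{\rm CE}\psi,\delta^1\psi)$, $\delta^1\psi(x)=\psi(x^{\{2\}})+\{x,\psi(x)\}$; $\mathrm{d}^n(\varphi,\omega)=(\mathrm{d}_{\rm CE}\varphi,\delta^n\omega)$ where $\mathrm{d}_{\rm CE}\varphi(x_1,..,x_{n+1})=\sum_{i<j}\varphi(\{x_i,x_j\},x_1,..,\hat x_i,..,\hat x_j,..,x_{n+1})+\sum_i\{x_i,\varphi(x_1,..,\hat x_i,..,x_{n+1})\}$ and $\delta^n\omega(x,z_2,..,z_n)=\{x,\varphi(x,z_2,..,z_n)\}+\sum_{i=2}^n\{z_i,\omega(x,z_2,..,\hat z_i,..,z_n)\}+\varphi(x^{\{2\}},z_2,..,z_n)+\sum_{i=2}^n\varphi(\{x,z_i\},x,z_2,..,\hat z_i,..,z_n)+\sum_{2\le i<j\le n}\omega(x,\{z_i,z_j\},z_2,..,\hat z_i,..,\hat z_j,..,z_n)$. *)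

theory Defs
  imports Main "HOL.Vector_Spaces"
begin

(* A is a type 'a of class comm_ring (commutative, associative, not necessarily unital),
   made into a K-algebra via a vector-space scaling over a field 'k. *)

locale restricted_poisson_algebra =
  vector_space scale
  for scale :: "'k::field \<Rightarrow> 'a::comm_ring \<Rightarrow> 'a" +
  fixes br :: "'a \<Rightarrow> 'a \<Rightarrow> 'a"
    and sq :: "'a \<Rightarrow> 'a"
  assumes char_two: "CHAR('k) = 2"
    and scale_mult: "\<And>c x y. scale c (x * y) = scale c x * y"
    and br_add_left: "\<And>x y z. br (x + y) z = br x z + br y z"
    and br_add_right: "\<And>x y z. br x (y + z) = br x y + br x z"
    and br_scale_left: "\<And>c x y. br (scale c x) y = scale c (br x y)"
    and br_scale_right: "\<And>c x y. br x (scale c y) = scale c (br x y)"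
    and br_alt: "\<And>x. br x x = 0"
    and br_jacobi: "\<And>x y z. br x (br y z) + br y (br z x) + br z (br x y) = 0"
    and br_leibniz: "\<And>a b c. br (a * b) c = a * br b c + b * br a c"
    and sq_scale: "\<And>c x. sq (scale c x) = scale (c ^ 2) (sq x)"
    and sq_ad: "\<And>x y. br (sq x) y = br x (br x y)"
    and sq_add: "\<And>x y. sq (x + y) = sq x + sq y + br x y"
    and sq_mult: "\<And>x y. sq (x * y) = (x * x) * sq y + (y * y) * sq x + x * y * br x y"

(* k-ary maps A^k \<rightarrow> A are represented as functions on lists, used on lists of length k *)

definition multilinear_on :: "('k::field \<Rightarrow> 'a::comm_ring \<Rightarrow> 'a) \<Rightarrow> nat \<Rightarrow> ('a list \<Rightarrow> 'a) \<Rightarrow> bool" where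
  "multilinear_on scale k f \<longleftrightarrow>
     (\<forall>xs i a b. length xs = k \<longrightarrow> i < k \<longrightarrow> f (xs[i := a + b]) = f (xs[i := a]) + f (xs[i := b])) \<and>
     (\<forall>xs i c a. length xs = k \<longrightarrow> i < k \<longrightarrow> f (xs[i := scale c a]) = scale c (f (xs[i := a])))"

definition alternating_on :: "nat \<Rightarrow> ('a::comm_ring list \<Rightarrow> 'a) \<Rightarrow> bool" where
  "alternating_on k f \<longleftrightarrow> (\<forall>xs i j. length xs = k \<longrightarrow> i < j \<longrightarrow> j < k \<longrightarrow> xs ! i = xs ! j \<longrightarrow> f xs = 0)"

definition derivation_slots :: "nat \<Rightarrow> ('a::comm_ring list \<Rightarrow> 'a) \<Rightarrow> bool" where
  "derivation_slots k f \<longleftrightarrow>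
     (\<forall>xs i a b. length xs = k \<longrightarrow> i < k \<longrightarrow> f (xs[i := a * b]) = a * f (xs[i := b]) + b * f (xs[i := a]))"

definition multiderivation :: "('k::field \<Rightarrow> 'a::comm_ring \<Rightarrow> 'a) \<Rightarrow> nat \<Rightarrow> ('a list \<Rightarrow> 'a) \<Rightarrow> bool" where
  "multiderivation scale k f \<longleftrightarrow> multilinear_on scale k f \<and> alternating_on k f \<and> derivation_slots k f"

text \<open>Membership in C^n_PA(A) for n \<ge> 2: pairs (phi, omega), omega x zs with length zs = n - 2.\<close>
definition PA_cochain :: "('k::field \<Rightarrow> 'a::comm_ring \<Rightarrow> 'a) \<Rightarrow> nat \<Rightarrow> ('a list \<Rightarrow> 'a) \<times> ('a \<Rightarrow> 'a list \<Rightarrow> 'a) \<Rightarrow> bool" where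
  "PA_cochain scale n c \<longleftrightarrow> (case c of (\<phi>, \<omega>) \<Rightarrow>
     multiderivation scale n \<phi> \<and>
     (\<forall>x. multilinear_on scale (n - 2) (\<omega> x) \<and> alternating_on (n - 2) (\<omega> x) \<and> derivation_slots (n - 2) (\<omega> x)) \<and>
     (\<forall>c x z. length z = n - 2 \<longrightarrow> \<omega> (scale c x) z = scale (c ^ 2) (\<omega> x z)) \<and>
     (\<forall>x y z. length z = n - 2 \<longrightarrow> \<omega> (x + y) z = \<omega> x z + \<omega> y z + \<phi> (x # y # z)) \<and>
     (\<forall>x y z. length z = n - 2 \<longrightarrow> \<omega> (x * y) z = (x * x) * \<omega> y z + (y * y) * \<omega> x z + x * y * \<phi> (x # y # z)))"

definition del_at :: "nat \<Rightarrow> 'b list \<Rightarrow> 'b list" where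
  "del_at i xs = take i xs @ drop (Suc i) xs"

text \<open>Chevalley--Eilenberg differential (no signs since char K = 2); arity = length of input list.\<close>
definition dCE :: "('a::comm_ring \<Rightarrow> 'a \<Rightarrow> 'a) \<Rightarrow> ('a list \<Rightarrow> 'a) \<Rightarrow> 'a list \<Rightarrow> 'a" where
  "dCE br \<phi> xs =
     (\<Sum>j<length xs. \<Sum>i<j. \<phi> (br (xs ! i) (xs ! j) # del_at i (del_at j xs)))
     + (\<Sum>i<length xs. br (xs ! i) (\<phi> (del_at i xs)))"

definition d0 :: "('a::comm_ring \<Rightarrow> 'a \<Rightarrow> 'a) \<Rightarrow> 'a \<Rightarrow> 'a list \<Rightarrow> 'a" where
  "d0 br a = (\<lambda>xs. br (hd xs) a)"

definition delta1 :: "('a::comm_ring \<Rightarrow> 'a \<Rightarrow> 'a) \<Rightarrow> ('a \<Rightarrow> 'a) \<Rightarrow> ('a list \<Rightarrow> 'a) \<Rightarrow> 'a \<Rightarrow> 'a list \<Rightarrow> 'a" where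
  "delta1 br sq \<psi> = (\<lambda>x zs. \<psi> [sq x] + br x (\<psi> [x]))"

definition d1 :: "('a::comm_ring \<Rightarrow> 'a \<Rightarrow> 'a) \<Rightarrow> ('a \<Rightarrow> 'a) \<Rightarrow> ('a list \<Rightarrow> 'a) \<Rightarrow> ('a list \<Rightarrow> 'a) \<times> ('a \<Rightarrow> 'a list \<Rightarrow> 'a)" where
  "d1 br sq \<psi> = (dCE br \<psi>, delta1 br sq \<psi>)"

text \<open>delta^n omega (x, z_2, ..., z_n), with zs = [z_2, ..., z_n].\<close>
definition deltaN :: "('a::comm_ring \<Rightarrow> 'a \<Rightarrow> 'a) \<Rightarrow> ('a \<Rightarrow> 'a) \<Rightarrow> ('a list \<Rightarrow> 'a) \<Rightarrow> ('a \<Rightarrow> 'a list \<Rightarrow> 'a) \<Rightarrow> 'a \<Rightarrow> 'a list \<Rightarrow> 'a" where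
  "deltaN br sq \<phi> \<omega> x zs =
     br x (\<phi> (x # zs))
     + (\<Sum>i<length zs. br (zs ! i) (\<omega> x (del_at i zs)))
     + \<phi> (sq x # zs)
     + (\<Sum>i<length zs. \<phi> (br x (zs ! i) # x # del_at i zs))
     + (\<Sum>j<length zs. \<Sum>i<j. \<omega> x (br (zs ! i) (zs ! j) # del_at i (del_at j zs)))"

definition dPA :: "('a::comm_ring \<Rightarrow> 'a \<Rightarrow> 'a) \<Rightarrow> ('a \<Rightarrow> 'a) \<Rightarrow> ('a list \<Rightarrow> 'a) \<times> ('a \<Rightarrow> 'a list \<Rightarrow> 'a) \<Rightarrow> ('a list \<Rightarrow> 'a) \<times> ('a \<Rightarrow> 'a list \<Rightarrow> 'a)" where
  "dPA br sq c = (case c of (\<phi>, \<omega>) \<Rightarrow> (dCE br \<phi>, deltaN br sq \<phi> \<omega>))"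

definition PA_is_zero :: "nat \<Rightarrow> ('a::comm_ring list \<Rightarrow> 'a) \<times> ('a \<Rightarrow> 'a list \<Rightarrow> 'a) \<Rightarrow> bool" where
  "PA_is_zero n c \<longleftrightarrow> (case c of (\<phi>, \<omega>) \<Rightarrow>
     (\<forall>xs. length xs = n \<longrightarrow> \<phi> xs = 0) \<and> (\<forall>x zs. length zs = n - 2 \<longrightarrow> \<omega> x zs = 0))"

end

theory Submission
  imports Defs "HOL-Library.Multiset"
begin

(*
  In characteristic 2 an alternating additive map of lists is the same as a symmetric one that
  vanishes on repeated arguments, so multiderivations can be handled one argument at a time.
  For symmetric phi the Chevalley-Eilenberg differential then unfolds as
    d phi (x, ys) = (L_x phi)(ys) + d (phi (x, -))(ys),
  where L_x is the Lie derivative: ad_x applied to the value and, in turn, to every argument.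
  The Jacobi identity gives L_x L_y + L_y L_x = L_{x,y}, and ad_(x^[2]) = ad_x^2 gives
  L_x L_x = L_(x^[2]); hence L_x commutes with d, and d d = 0 by induction on the arity.

  The second component of the differential is delta omega (x) = Q_phi (x) + d (omega x), where
  Q_phi (x) = L_x (phi (x, -)) + phi (x^[2], -). The map Q_phi is quadratic in x with polar form
  d phi (x, y, -) + d (phi (x, y, -)), and on products its correction terms cancel those of
  d (omega (x y)); so delta omega satisfies the defining identities of a cochain. Finally Q
  commutes with d, so the second component of d d (phi, omega) is d d (omega x) = 0.
*)

section \<open>Symmetric functions of lists\<close>

lemma del_at_Cons_0 [simp]: "del_at 0 (x # xs) = xs"
  by (simp add: del_at_def)

lemma del_at_Cons_Suc [simp]: "del_at (Suc i) (x # xs) = x # del_at i xs"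
  by (simp add: del_at_def)

lemma length_del_at [simp]: "i < length xs \<Longrightarrow> length (del_at i xs) = length xs - 1"
  by (simp add: del_at_def)

lemma nth_del_at_less: "i < j \<Longrightarrow> j < length xs \<Longrightarrow> del_at j xs ! i = xs ! i"
  by (simp add: del_at_def nth_append)

lemma mset_del_at: "i < length xs \<Longrightarrow> mset xs = add_mset (xs ! i) (mset (del_at i xs))"
  by (metis del_at_def id_take_nth_drop mset.simps(2) mset_append union_mset_add_mset_right)

lemma mset_update_eq_Cons_del_at: "i < length xs \<Longrightarrow> mset (xs[i := c]) = mset (c # del_at i xs)"
proof -
  assume i: "i < length xs"
  then have "mset xs - {#xs ! i#} = mset (del_at i xs)" using mset_del_at[OF i] by simp
  then show ?thesis using i by (simp add: mset_update)
qed

definition symmetric_on :: "nat \<Rightarrow> ('a list \<Rightarrow> 'b) \<Rightarrow> bool" where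
  "symmetric_on k f \<longleftrightarrow> (\<forall>xs ys. length xs = k \<longrightarrow> mset ys = mset xs \<longrightarrow> f ys = f xs)"

lemma symmetric_onD: "symmetric_on k f \<Longrightarrow> length xs = k \<Longrightarrow> mset ys = mset xs \<Longrightarrow> f ys = f xs"
  unfolding symmetric_on_def by blast

lemma symmetric_on_le_1: "k \<le> 1 \<Longrightarrow> symmetric_on k f"
  unfolding symmetric_on_def
proof (intro allI impI)
  fix xs ys :: "'a list"
  assume "k \<le> 1" "length xs = k" "mset ys = mset xs"
  then show "f ys = f xs"
    by (cases xs) auto
qed

lemma symmetric_on_ConsI:
  assumes tail: "\<And>x. symmetric_on k (\<lambda>zs. f (x # zs))"
    and swap: "\<And>x y zs. Suc (length zs) = k \<Longrightarrow> f (x # y # zs) = f (y # x # zs)"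
  shows "symmetric_on (Suc k) f"
  unfolding symmetric_on_def
proof (intro allI impI)
  fix xs ys :: "'a list"
  assume l: "length xs = Suc k" and m: "mset ys = mset xs"
  obtain x xs' where xs: "xs = x # xs'" using l by (cases xs) auto
  obtain y ys' where ys: "ys = y # ys'"
    using l mset_eq_length[OF m] by (cases ys) auto
  show "f ys = f xs"
  proof (cases "x = y")
    case True
    then show ?thesis using symmetric_onD[OF tail[of x], of xs' ys'] l m xs ys by simp
  next
    case False
    then have "y \<in> set xs'"
      using m xs ys by (metis list.set_intros(1) mset_eq_setD set_ConsD)
    define rest where "rest = remove1 y xs'"
    have mr: "mset xs' = mset (y # rest)" using \<open>y \<in> set xs'\<close> by (simp add: rest_def)
    then have lr: "Suc (length rest) = k" using l xs by (metis length_Cons mset_eq_length old.nat.inject)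
    have "f (x # xs') = f (x # y # rest)"
      using symmetric_onD[OF tail[of x], of "y # rest" xs'] mr lr by simp
    also have "\<dots> = f (y # x # rest)" using swap lr by blast
    also have "\<dots> = f (y # ys')"
      using symmetric_onD[OF tail[of y], of "x # rest" ys'] lr m xs ys mr by simp
    finally show ?thesis using xs ys by simp
  qed
qed

lemma symmetric_on_update:
  "symmetric_on k f \<Longrightarrow> length xs = k \<Longrightarrow> i < k \<Longrightarrow> f (xs[i := c]) = f (c # del_at i xs)"
  using symmetric_onD[of k f "c # del_at i xs" "xs[i := c]"] mset_update_eq_Cons_del_at[of i xs c]
  by simp

lemma symmetric_on_swap:
  "symmetric_on k f \<Longrightarrow> Suc (Suc (length zs)) = k \<Longrightarrow> f (y # x # zs) = f (x # y # zs)"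
  by (rule symmetric_onD) auto

lemma symmetric_on_Cons: "symmetric_on (Suc k) f \<Longrightarrow> symmetric_on k (\<lambda>zs. f (x # zs))"
  unfolding symmetric_on_def by simp

lemma symmetric_on_comp: "symmetric_on k f \<Longrightarrow> symmetric_on k (\<lambda>w. h (f w))"
  unfolding symmetric_on_def by metis

lemma symmetric_on_add:
  "symmetric_on k f \<Longrightarrow> symmetric_on k g \<Longrightarrow> symmetric_on k (\<lambda>w. f w + g w)"
  unfolding symmetric_on_def by metis

lemma symmetric_on_cong:
  assumes "symmetric_on k f" "\<And>w. length w = k \<Longrightarrow> f w = g w"
  shows "symmetric_on k g"
  using assms unfolding symmetric_on_def by (metis mset_eq_length)

section \<open>Characteristic two\<close>

context restricted_poisson_algebra
begin

lemma add_self [simp]: "(x::'a) + x = 0"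
proof -
  have "(of_nat 2 :: 'k) = 0"
    using char_two by (simp only: of_nat_eq_0_iff_char_dvd) simp
  then have "(1::'k) + 1 = 0" by simp
  then have "scale (1 + 1) x = 0" by simp
  then show ?thesis by (simp only: scale_left_distrib scale_one)
qed

lemma add_self_left [simp]: "(x::'a) + (x + y) = y"
  by (simp add: add.assoc[symmetric])

lemma eq_iff_add_eq_0: "((a::'a) = b) \<longleftrightarrow> a + b = 0"
proof
  assume "a + b = 0"
  then have "a + (a + b) = a" by simp
  then show "a = b" by simp
qed simp

lemma br_zero_right [simp]: "br x 0 = 0"
  using br_add_right[of x 0 0] by simp

lemma br_commute: "br x y = br y x"
proof -
  have "0 = br (x + y) (x + y)" by (rule br_alt[symmetric])
  also have "\<dots> = br x x + br y x + (br x y + br y y)" by (simp only: br_add_left br_add_right)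
  also have "\<dots> = br y x + br x y" by (simp only: br_alt add_0_left add_0_right)
  finally have "br y x + br x y = 0" by simp
  then show ?thesis by (subst eq_iff_add_eq_0) (simp add: add.commute)
qed

lemma br_leibniz_right: "br c (a * b) = a * br c b + b * br c a"
  using br_leibniz[of a b c] by (simp add: br_commute[of c])

lemma br_br_left: "br (br x y) m = br x (br y m) + br y (br x m)"
proof -
  have "br x (br y m) + br y (br x m) + br (br x y) m = 0"
    using br_jacobi[of x y m] by (simp only: br_commute[of m] br_commute[of _ x])
  then show ?thesis by (subst eq_iff_add_eq_0) (simp only: add.commute add.left_commute)
qed

lemma br_sum_right: "br a (sum f A) = (\<Sum>i\<in>A. br a (f i))"
  using sum_comp_morphism[of "br a" f A] by (simp add: br_add_right o_def)

text \<open>The off-diagonal terms of a symmetric double sum cancel in pairs.\<close>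

lemma sum_symmetric_square:
  fixes h :: "nat \<Rightarrow> nat \<Rightarrow> 'a"
  assumes "\<And>k l. h k l = h l k"
  shows "(\<Sum>k<m. \<Sum>l<m. h k l) = (\<Sum>k<m. h k k)"
proof (induction m)
  case 0
  then show ?case by simp
next
  case (Suc m)
  have "(\<Sum>k<Suc m. \<Sum>l<Suc m. h k l)
      = (\<Sum>k<m. \<Sum>l<m. h k l) + ((\<Sum>k<m. h k m) + (\<Sum>l<m. h m l)) + h m m"
    by (simp add: sum.distrib add_ac)
  also have "(\<Sum>l<m. h m l) = (\<Sum>k<m. h k m)" using assms by simp
  finally show ?case using Suc.IH by simp
qed

end

section \<open>The Lie derivative and the Chevalley--Eilenberg differential\<close>

definition ad_args :: "('a::comm_ring \<Rightarrow> 'a \<Rightarrow> 'a) \<Rightarrow> 'a \<Rightarrow> ('a list \<Rightarrow> 'a) \<Rightarrow> 'a list \<Rightarrow> 'a" where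
  "ad_args br a f zs = (\<Sum>k<length zs. f (zs[k := br a (zs ! k)]))"

definition lie_deriv :: "('a::comm_ring \<Rightarrow> 'a \<Rightarrow> 'a) \<Rightarrow> 'a \<Rightarrow> ('a list \<Rightarrow> 'a) \<Rightarrow> 'a list \<Rightarrow> 'a" where
  "lie_deriv br a f zs = br a (f zs) + ad_args br a f zs"

lemma ad_args_Nil [simp]: "ad_args br a f [] = 0"
  by (simp add: ad_args_def)

lemma ad_args_Cons:
  "ad_args br a f (y # zs) = f (br a y # zs) + ad_args br a (\<lambda>w. f (y # w)) zs"
  unfolding ad_args_def by (simp only: length_Cons sum.lessThan_Suc_shift) simp

lemma lie_deriv_Cons:
  "lie_deriv br a f (y # zs) = lie_deriv br a (\<lambda>w. f (y # w)) zs + f (br a y # zs)"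
  by (simp add: lie_deriv_def ad_args_Cons add_ac)

lemma ad_args_cong:
  "(\<And>w. length w = length zs \<Longrightarrow> f w = g w) \<Longrightarrow> ad_args br a f zs = ad_args br a g zs"
  unfolding ad_args_def by (intro sum.cong) auto

lemma lie_deriv_cong:
  "(\<And>w. length w = length zs \<Longrightarrow> f w = g w) \<Longrightarrow> lie_deriv br a f zs = lie_deriv br a g zs"
  unfolding lie_deriv_def using ad_args_cong[of zs f g br a] by simp

lemma ad_args_add: "ad_args br a (\<lambda>w. f w + g w) zs = ad_args br a f zs + ad_args br a g zs"
  unfolding ad_args_def by (simp add: sum.distrib)

lemma ad_args_zero: "ad_args br a (\<lambda>w. 0) zs = 0"
  unfolding ad_args_def by simp

lemma ad_args_mult: "ad_args br a (\<lambda>w. c * f w) zs = c * ad_args br a f zs"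
  unfolding ad_args_def by (simp add: sum_distrib_left)

lemma ad_args_ad_args:
  "ad_args br x (ad_args br y f) zs = (\<Sum>k<length zs. \<Sum>l<length zs.
     if l = k then f (zs[k := br y (br x (zs ! k))])
     else f (zs[k := br x (zs ! k), l := br y (zs ! l)]))"
  unfolding ad_args_def by (intro sum.cong refl) (auto simp: nth_list_update)

lemma dCE_Nil [simp]: "dCE br f [] = 0"
  by (simp add: dCE_def)

lemma dCE_single: "dCE br f [y] = br y (f [])"
  by (simp add: dCE_def del_at_def)

lemma dCE_cong:
  assumes "\<And>w. Suc (length w) = length zs \<Longrightarrow> f w = g w"
  shows "dCE br f zs = dCE br g zs"
  unfolding dCE_def using assms by (intro arg_cong2[where f = "(+)"] sum.cong refl) auto

lemma dCE_Cons_expand: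
  "dCE br f (x # ys) =
     (\<Sum>k<length ys. f (br x (ys ! k) # del_at k ys)) + br x (f ys)
     + (\<Sum>j<length ys. \<Sum>i<j. f (br (ys ! i) (ys ! j) # x # del_at i (del_at j ys)))
     + (\<Sum>k<length ys. br (ys ! k) (f (x # del_at k ys)))"
  unfolding dCE_def
  by (simp only: length_Cons sum.lessThan_Suc_shift) (simp add: sum.distrib add_ac)

context restricted_poisson_algebra
begin

lemma dCE_add: "dCE br (\<lambda>w. f w + g w) zs = dCE br f zs + dCE br g zs"
  unfolding dCE_def by (simp add: sum.distrib br_add_right add_ac)

lemma dCE_zero: "dCE br (\<lambda>w. 0) zs = 0"
  unfolding dCE_def by simp

lemma dCE_scale: "dCE br (\<lambda>w. scale c (f w)) zs = scale c (dCE br f zs)"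
  unfolding dCE_def by (simp add: scale_sum_right br_scale_right scale_right_distrib)

lemma dCE_mult:
  "dCE br (\<lambda>w. c * f w) zs = c * dCE br f zs + (\<Sum>i<length zs. br (zs ! i) c * f (del_at i zs))"
  unfolding dCE_def
  by (simp add: sum_distrib_left br_leibniz_right sum.distrib distrib_left add_ac mult.commute)

lemma ad_args_scale: "ad_args br a (\<lambda>w. scale c (f w)) zs = scale c (ad_args br a f zs)"
  unfolding ad_args_def by (simp add: scale_sum_right)

lemma ad_args_br: "ad_args br a (\<lambda>w. br b (f w)) zs = br b (ad_args br a f zs)"
  unfolding ad_args_def by (simp add: br_sum_right)

lemma lie_deriv_add: "lie_deriv br a (\<lambda>w. f w + g w) zs = lie_deriv br a f zs + lie_deriv br a g zs"
  unfolding lie_deriv_def by (simp add: ad_args_add br_add_right add_ac)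

lemma lie_deriv_mult: "lie_deriv br a (\<lambda>w. c * f w) zs = c * lie_deriv br a f zs + br a c * f zs"
  unfolding lie_deriv_def
  by (simp add: ad_args_mult br_leibniz_right distrib_left add_ac mult.commute)

lemma lie_deriv_scale: "lie_deriv br a (\<lambda>w. scale c (f w)) zs = scale c (lie_deriv br a f zs)"
  unfolding lie_deriv_def by (simp add: ad_args_scale br_scale_right scale_right_distrib)

lemma symmetric_on_ad_args: "symmetric_on k f \<Longrightarrow> symmetric_on k (ad_args br a f)"
proof (induction k arbitrary: f)
  case 0
  then show ?case by (simp add: symmetric_on_le_1)
next
  case (Suc k)
  show ?case
  proof (rule symmetric_on_ConsI)
    fix y
    have "symmetric_on k (\<lambda>zs. f (br a y # zs) + ad_args br a (\<lambda>w. f (y # w)) zs)"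
      using symmetric_on_Cons[OF Suc.prems] by (intro symmetric_on_add Suc.IH)
    then show "symmetric_on k (\<lambda>zs. ad_args br a f (y # zs))"
      by (simp add: ad_args_Cons)
  next
    fix x y :: 'a and zs :: "'a list"
    assume l: "Suc (length zs) = k"
    have "ad_args br a (\<lambda>w. f (x # y # w)) zs = ad_args br a (\<lambda>w. f (y # x # w)) zs"
      using symmetric_on_swap[OF Suc.prems] l by (intro ad_args_cong) simp
    moreover have "f (br a x # y # zs) = f (y # br a x # zs)"
      and "f (x # br a y # zs) = f (br a y # x # zs)"
      using symmetric_on_swap[OF Suc.prems] l by simp_all
    ultimately show "ad_args br a f (x # y # zs) = ad_args br a f (y # x # zs)"
      by (simp add: ad_args_Cons add_ac)
  qed
qed

lemma symmetric_on_lie_deriv: "symmetric_on k f \<Longrightarrow> symmetric_on k (lie_deriv br a f)"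
  unfolding lie_deriv_def by (rule symmetric_on_add[OF symmetric_on_comp symmetric_on_ad_args])

lemma dCE_Cons:
  assumes "symmetric_on (length ys) f"
  shows "dCE br f (x # ys) = lie_deriv br x f ys + dCE br (\<lambda>w. f (x # w)) ys"
proof -
  have "(\<Sum>k<length ys. f (br x (ys ! k) # del_at k ys)) = ad_args br x f ys"
    unfolding ad_args_def by (intro sum.cong refl) (simp add: symmetric_on_update[OF assms])
  moreover have "(\<Sum>j<length ys. \<Sum>i<j. f (br (ys ! i) (ys ! j) # x # del_at i (del_at j ys)))
      = (\<Sum>j<length ys. \<Sum>i<j. f (x # br (ys ! i) (ys ! j) # del_at i (del_at j ys)))"
    using symmetric_on_swap[OF assms] by (intro sum.cong refl) simp
  ultimately show ?thesis
    unfolding dCE_Cons_expand by (simp add: lie_deriv_def dCE_def add_ac)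
qed

lemma dCE_Cons_Cons:
  assumes "symmetric_on (Suc (length zs)) f"
  shows "dCE br f (x # y # zs) = br x (f (y # zs)) + br y (f (x # zs)) + f (br x y # zs)
     + ad_args br x (\<lambda>w. f (y # w)) zs + ad_args br y (\<lambda>w. f (x # w)) zs
     + dCE br (\<lambda>w. f (x # y # w)) zs"
  using assms symmetric_on_Cons[OF assms]
  by (simp add: dCE_Cons lie_deriv_def ad_args_Cons add_ac)

lemma symmetric_on_dCE: "symmetric_on k f \<Longrightarrow> symmetric_on (Suc k) (dCE br f)"
proof (induction k arbitrary: f)
  case 0
  then show ?case by (simp add: symmetric_on_le_1)
next
  case (Suc k)
  show ?case
  proof (rule symmetric_on_ConsI)
    fix x
    have "symmetric_on (Suc k) (\<lambda>ys. lie_deriv br x f ys + dCE br (\<lambda>w. f (x # w)) ys)"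
      by (intro symmetric_on_add symmetric_on_lie_deriv Suc.IH symmetric_on_Cons Suc.prems)
    then show "symmetric_on (Suc k) (\<lambda>ys. dCE br f (x # ys))"
      by (rule symmetric_on_cong) (simp add: dCE_Cons Suc.prems)
  next
    fix x y :: 'a and zs :: "'a list"
    assume l: "Suc (length zs) = Suc k"
    have "dCE br (\<lambda>w. f (x # y # w)) zs = dCE br (\<lambda>w. f (y # x # w)) zs"
      using symmetric_on_swap[OF Suc.prems] l by (intro dCE_cong) simp
    then show "dCE br f (x # y # zs) = dCE br f (y # x # zs)"
      using Suc.prems l by (simp add: dCE_Cons_Cons br_commute[of x y] add_ac)
  qed
qed

end

lemma alternating_on_Cons: "alternating_on (Suc k) f \<Longrightarrow> alternating_on k (\<lambda>zs. f (x # zs))"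
  unfolding alternating_on_def
proof (intro allI impI)
  fix xs :: "'a list" and i j
  assume "\<forall>xs i j. length xs = Suc k \<longrightarrow> i < j \<longrightarrow> j < Suc k \<longrightarrow> xs ! i = xs ! j \<longrightarrow> f xs = 0"
    and "length xs = k" "i < j" "j < k" "xs ! i = xs ! j"
  then show "f (x # xs) = 0" by (metis Suc_less_eq length_Cons nth_Cons_Suc)
qed

section \<open>Multiderivations\<close>

definition symmetric_multider ::
    "('k::field \<Rightarrow> 'a::comm_ring \<Rightarrow> 'a) \<Rightarrow> nat \<Rightarrow> ('a list \<Rightarrow> 'a) \<Rightarrow> bool" where
  "symmetric_multider scale k f \<longleftrightarrow> symmetric_on k f
     \<and> (\<forall>a b ys. Suc (length ys) = k \<longrightarrow> f ((a + b) # ys) = f (a # ys) + f (b # ys))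
     \<and> (\<forall>c a ys. Suc (length ys) = k \<longrightarrow> f (scale c a # ys) = scale c (f (a # ys)))
     \<and> (\<forall>a b ys. Suc (length ys) = k \<longrightarrow> f ((a * b) # ys) = a * f (b # ys) + b * f (a # ys))
     \<and> (\<forall>a ys. Suc (Suc (length ys)) = k \<longrightarrow> f (a # a # ys) = 0)"

lemma symmetric_multiderI:
  assumes "symmetric_on k f"
    and "\<And>a b ys. Suc (length ys) = k \<Longrightarrow> f ((a + b) # ys) = f (a # ys) + f (b # ys)"
    and "\<And>c a ys. Suc (length ys) = k \<Longrightarrow> f (scale c a # ys) = scale c (f (a # ys))"
    and "\<And>a b ys. Suc (length ys) = k \<Longrightarrow> f ((a * b) # ys) = a * f (b # ys) + b * f (a # ys)"
    and "\<And>a ys. Suc (Suc (length ys)) = k \<Longrightarrow> f (a # a # ys) = 0"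
  shows "symmetric_multider scale k f"
  unfolding symmetric_multider_def using assms by blast

context
  fixes scale :: "'k::field \<Rightarrow> 'a::comm_ring \<Rightarrow> 'a" and k :: nat and f :: "'a list \<Rightarrow> 'a"
  assumes f: "symmetric_multider scale k f"
begin

lemma symmetric_multider_symmetric: "symmetric_on k f"
  using f unfolding symmetric_multider_def by blast

lemma symmetric_multider_add: "Suc (length ys) = k \<Longrightarrow> f ((a + b) # ys) = f (a # ys) + f (b # ys)"
  using f unfolding symmetric_multider_def by blast

lemma symmetric_multider_scale: "Suc (length ys) = k \<Longrightarrow> f (scale c a # ys) = scale c (f (a # ys))"
  using f unfolding symmetric_multider_def by blast

lemma symmetric_multider_mult:
  "Suc (length ys) = k \<Longrightarrow> f ((a * b) # ys) = a * f (b # ys) + b * f (a # ys)"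
  using f unfolding symmetric_multider_def by blast

lemma symmetric_multider_repeat: "Suc (Suc (length ys)) = k \<Longrightarrow> f (a # a # ys) = 0"
  using f unfolding symmetric_multider_def by blast

lemma symmetric_multider_zero: "Suc (length ys) = k \<Longrightarrow> f (0 # ys) = 0"
  using symmetric_multider_add[of ys 0 0] by simp

lemma symmetric_multider_swap: "Suc (Suc (length zs)) = k \<Longrightarrow> f (y # x # zs) = f (x # y # zs)"
  by (rule symmetric_on_swap[OF symmetric_multider_symmetric])

lemma symmetric_multider_update:
  "length xs = k \<Longrightarrow> i < k \<Longrightarrow> f (xs[i := c]) = f (c # del_at i xs)"
  by (rule symmetric_on_update[OF symmetric_multider_symmetric])

lemma symmetric_multider_add_slot:
  "length xs = k \<Longrightarrow> i < k \<Longrightarrow> f (xs[i := a + b]) = f (xs[i := a]) + f (xs[i := b])"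
  by (simp add: symmetric_multider_update symmetric_multider_add)

lemma symmetric_multider_scale_slot:
  "length xs = k \<Longrightarrow> i < k \<Longrightarrow> f (xs[i := scale c a]) = scale c (f (xs[i := a]))"
  by (simp add: symmetric_multider_update symmetric_multider_scale)

lemma symmetric_multider_mult_slot:
  "length xs = k \<Longrightarrow> i < k \<Longrightarrow> f (xs[i := a * b]) = a * f (xs[i := b]) + b * f (xs[i := a])"
  by (simp add: symmetric_multider_update symmetric_multider_mult)

lemma symmetric_multider_alternating: "alternating_on k f"
  unfolding alternating_on_def
proof (intro allI impI)
  fix xs :: "'a list" and i j
  assume l: "length xs = k" and ij: "i < j" "j < k" and e: "xs ! i = xs ! j"
  define ys where "ys = del_at j xs"
  have ly: "i < length ys" using l ij by (simp add: ys_def)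
  have "ys ! i = xs ! j" using nth_del_at_less[OF ij(1), of xs] ij l e by (simp add: ys_def)
  then have "mset (xs ! j # ys) = mset (xs ! j # xs ! j # del_at i ys)"
    using mset_del_at[OF ly] by simp
  then have "f (xs ! j # ys) = f (xs ! j # xs ! j # del_at i ys)"
    using symmetric_onD[OF symmetric_multider_symmetric, of "xs ! j # xs ! j # del_at i ys"
        "xs ! j # ys"] ly ij l
    by (simp add: ys_def)
  also have "\<dots> = 0" by (rule symmetric_multider_repeat) (use ly ij l in \<open>simp add: ys_def\<close>)
  finally show "f xs = 0"
    using symmetric_multider_update[OF l ij(2), of "xs ! j"] by (simp add: ys_def)
qed

lemma multiderivation_if_symmetric_multider: "multiderivation scale k f"
  unfolding multiderivation_def multilinear_on_def derivation_slots_def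
  by (simp add: symmetric_multider_alternating symmetric_multider_add_slot
      symmetric_multider_scale_slot symmetric_multider_mult_slot)

end

lemma symmetric_multider_cong:
  assumes f: "symmetric_multider scale k f" and fg: "\<And>w. length w = k \<Longrightarrow> f w = g w"
  shows "symmetric_multider scale k g"
proof (rule symmetric_multiderI)
  show "symmetric_on k g" by (rule symmetric_on_cong[OF symmetric_multider_symmetric[OF f] fg])
qed (use fg symmetric_multider_add[OF f] symmetric_multider_scale[OF f]
      symmetric_multider_mult[OF f] symmetric_multider_repeat[OF f] in \<open>simp_all\<close>)

lemma symmetric_multider_Cons:
  fixes f :: "'a::comm_ring list \<Rightarrow> 'a"
  assumes f: "symmetric_multider scale (Suc k) f"
  shows "symmetric_multider scale k (\<lambda>zs. f (x # zs))"
proof -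
  have swap: "f (x # v # ys) = f (v # x # ys)" if "Suc (length ys) = k" for v ys
    using symmetric_multider_swap[OF f, of ys v x] that by simp
  show ?thesis
  proof (rule symmetric_multiderI)
    show "symmetric_on k (\<lambda>zs. f (x # zs))"
      by (rule symmetric_on_Cons[OF symmetric_multider_symmetric[OF f]])
  next
    fix a :: 'a and ys :: "'a list"
    assume "Suc (Suc (length ys)) = k"
    moreover have "mset (x # a # a # ys) = mset (a # a # x # ys)" by simp
    ultimately show "f (x # a # a # ys) = 0"
      using symmetric_onD[OF symmetric_multider_symmetric[OF f], of "a # a # x # ys" "x # a # a # ys"]
        symmetric_multider_repeat[OF f, of "x # ys" a] by simp
  qed (simp_all add: swap symmetric_multider_add[OF f] symmetric_multider_scale[OF f]
      symmetric_multider_mult[OF f])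
qed

context restricted_poisson_algebra
begin

lemma symmetric_on_if_alternating_additive:
  fixes f :: "'a list \<Rightarrow> 'a"
  assumes "alternating_on k f"
    and "\<And>xs i a b. length xs = k \<Longrightarrow> i < k \<Longrightarrow> f (xs[i := a + b]) = f (xs[i := a]) + f (xs[i := b])"
  shows "symmetric_on k f"
  using assms
proof (induction k arbitrary: f)
  case 0
  then show ?case by (simp add: symmetric_on_le_1)
next
  case (Suc k)
  show ?case
  proof (rule symmetric_on_ConsI)
    fix x
    have "alternating_on k (\<lambda>zs. f (x # zs))"
      using Suc.prems(1) by (rule alternating_on_Cons)
    moreover have "f (x # xs[i := a + b]) = f (x # xs[i := a]) + f (x # xs[i := b])"
      if "length xs = k" "i < k" for xs i a b
      using Suc.prems(2)[of "x # xs" "Suc i" a b] that by simp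
    ultimately show "symmetric_on k (\<lambda>zs. f (x # zs))" by (rule Suc.IH)
  next
    fix x y :: 'a and zs :: "'a list"
    assume l: "Suc (length zs) = k"
    have repeat: "f (u # u # zs) = 0" for u
      using Suc.prems(1)[unfolded alternating_on_def, rule_format, of "u # u # zs" 0 1] l by simp
    have add: "f (xs[i := u + v]) = f (xs[i := u]) + f (xs[i := v])"
      if "length xs = Suc k" "i < Suc k" for xs i u v
      using Suc.prems(2) that by blast
    have "f ((x + y) # (x + y) # zs) = f (x # (x + y) # zs) + f (y # (x + y) # zs)"
      using add[of "(x + y) # (x + y) # zs" 0 x y] l by simp
    moreover have "f (x # (x + y) # zs) = f (x # x # zs) + f (x # y # zs)"
      using add[of "x # (x + y) # zs" 1 x y] l by simp
    moreover have "f (y # (x + y) # zs) = f (y # x # zs) + f (y # y # zs)"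
      using add[of "y # (x + y) # zs" 1 x y] l by simp
    ultimately have "f (x # y # zs) + f (y # x # zs) = 0"
      by (simp add: repeat)
    then show "f (x # y # zs) = f (y # x # zs)" by (subst eq_iff_add_eq_0)
  qed
qed

lemma symmetric_multider_if_multiderivation:
  assumes "multiderivation scale k f"
  shows "symmetric_multider scale k f"
proof -
  have alt: "alternating_on k f" and lin: "multilinear_on scale k f" and der: "derivation_slots k f"
    using assms unfolding multiderivation_def by auto
  note add = lin[unfolded multilinear_on_def, THEN conjunct1, rule_format]
  note hom = lin[unfolded multilinear_on_def, THEN conjunct2, rule_format]
  note mult = der[unfolded derivation_slots_def, rule_format]
  show ?thesis
  proof (rule symmetric_multiderI)
    show "symmetric_on k f" using alt add by (rule symmetric_on_if_alternating_additive)
  next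
    fix a b :: 'a and ys :: "'a list"
    assume "Suc (length ys) = k"
    then show "f ((a + b) # ys) = f (a # ys) + f (b # ys)"
      and "f ((a * b) # ys) = a * f (b # ys) + b * f (a # ys)"
      using add[of "a # ys" 0 a b] mult[of "a # ys" 0 a b] by simp_all
  next
    fix c a and ys :: "'a list"
    assume "Suc (length ys) = k"
    then show "f (scale c a # ys) = scale c (f (a # ys))"
      using hom[of "a # ys" 0 c a] by simp
  next
    fix a :: 'a and ys :: "'a list"
    assume "Suc (Suc (length ys)) = k"
    then show "f (a # a # ys) = 0"
      using alt[unfolded alternating_on_def, rule_format, of "a # a # ys" 0 1] by simp
  qed
qed

lemma multiderivation_iff_symmetric_multider:
  "multiderivation scale k f \<longleftrightarrow> symmetric_multider scale k f"
  by (rule iffI[OF symmetric_multider_if_multiderivation multiderivation_if_symmetric_multider])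

lemma symmetric_multider_add_fun:
  assumes f: "symmetric_multider scale k f" and g: "symmetric_multider scale k g"
  shows "symmetric_multider scale k (\<lambda>w. f w + g w)"
proof (rule symmetric_multiderI)
  show "symmetric_on k (\<lambda>w. f w + g w)"
    by (rule symmetric_on_add[OF symmetric_multider_symmetric[OF f] symmetric_multider_symmetric[OF g]])
qed (simp_all add: symmetric_multider_add[OF f] symmetric_multider_add[OF g]
      symmetric_multider_scale[OF f] symmetric_multider_scale[OF g] scale_right_distrib
      symmetric_multider_mult[OF f] symmetric_multider_mult[OF g] distrib_left
      symmetric_multider_repeat[OF f] symmetric_multider_repeat[OF g] add_ac)

lemma lie_deriv_add_point:
  assumes "symmetric_multider scale k f" "length ys = k"
  shows "lie_deriv br (a + b) f ys = lie_deriv br a f ys + lie_deriv br b f ys"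
proof -
  have "ad_args br (a + b) f ys = ad_args br a f ys + ad_args br b f ys"
    unfolding ad_args_def
    by (simp add: sum.distrib[symmetric] br_add_left symmetric_multider_add_slot[OF assms(1)] assms(2))
  then show ?thesis unfolding lie_deriv_def by (simp add: br_add_left add_ac)
qed

lemma lie_deriv_scale_point:
  assumes "symmetric_multider scale k f" "length ys = k"
  shows "lie_deriv br (scale c a) f ys = scale c (lie_deriv br a f ys)"
proof -
  have "ad_args br (scale c a) f ys = scale c (ad_args br a f ys)"
    unfolding ad_args_def
    by (simp add: scale_sum_right br_scale_left symmetric_multider_scale_slot[OF assms(1)] assms(2))
  then show ?thesis unfolding lie_deriv_def by (simp add: br_scale_left scale_right_distrib)
qed

lemma lie_deriv_mult_point:
  assumes f: "symmetric_multider scale k f" and l: "length ys = k"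
  shows "lie_deriv br (a * b) f ys = a * lie_deriv br b f ys + b * lie_deriv br a f ys
    + (\<Sum>i<length ys. br b (ys ! i) * f (ys[i := a]) + br a (ys ! i) * f (ys[i := b]))"
proof -
  have slot: "f (ys[i := br (a * b) (ys ! i)])
      = a * f (ys[i := br b (ys ! i)]) + b * f (ys[i := br a (ys ! i)])
        + (br b (ys ! i) * f (ys[i := a]) + br a (ys ! i) * f (ys[i := b]))"
    if "i < length ys" for i
    using that l by (simp add: br_leibniz symmetric_multider_add_slot[OF f]
        symmetric_multider_mult_slot[OF f] add_ac)
  have "ad_args br (a * b) f ys = a * ad_args br b f ys + b * ad_args br a f ys
    + (\<Sum>i<length ys. br b (ys ! i) * f (ys[i := a]) + br a (ys ! i) * f (ys[i := b]))"
    unfolding ad_args_def by (simp add: slot sum.distrib sum_distrib_left)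
  then show ?thesis unfolding lie_deriv_def by (simp add: br_leibniz distrib_left add_ac)
qed

lemma lie_deriv_Cons_mult:
  assumes f: "symmetric_multider scale k f" and l: "Suc (length ys) = k"
  shows "lie_deriv br x f ((a * b) # ys) = a * lie_deriv br x f (b # ys) + b * lie_deriv br x f (a # ys)"
proof -
  have "ad_args br x (\<lambda>w. f ((a * b) # w)) ys
      = a * ad_args br x (\<lambda>w. f (b # w)) ys + b * ad_args br x (\<lambda>w. f (a # w)) ys"
    using symmetric_multider_mult[OF f] l
    by (simp add: ad_args_add[symmetric] ad_args_mult[symmetric] cong: ad_args_cong)
  moreover have "f (br x (a * b) # ys)
      = a * f (br x b # ys) + br x b * f (a # ys) + (b * f (br x a # ys) + br x a * f (b # ys))"
    using l by (simp add: br_leibniz_right symmetric_multider_add[OF f] symmetric_multider_mult[OF f])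
  ultimately show ?thesis
    using l by (simp add: lie_deriv_def ad_args_Cons symmetric_multider_mult[OF f]
        br_leibniz_right br_add_right algebra_simps)
qed

lemma symmetric_multider_lie_deriv:
  assumes f: "symmetric_multider scale k f"
  shows "symmetric_multider scale k (lie_deriv br x f)"
proof (rule symmetric_multiderI)
  show "symmetric_on k (lie_deriv br x f)"
    by (rule symmetric_on_lie_deriv[OF symmetric_multider_symmetric[OF f]])
next
  fix a b :: 'a and ys :: "'a list"
  assume l: "Suc (length ys) = k"
  have "ad_args br x (\<lambda>w. f ((a + b) # w)) ys
      = ad_args br x (\<lambda>w. f (a # w)) ys + ad_args br x (\<lambda>w. f (b # w)) ys"
    using symmetric_multider_add[OF f] l by (simp add: ad_args_add[symmetric] cong: ad_args_cong)
  then show "lie_deriv br x f ((a + b) # ys) = lie_deriv br x f (a # ys) + lie_deriv br x f (b # ys)"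
    using l by (simp add: lie_deriv_def ad_args_Cons symmetric_multider_add[OF f] br_add_right add_ac)
next
  fix c a and ys :: "'a list"
  assume l: "Suc (length ys) = k"
  have "ad_args br x (\<lambda>w. f (scale c a # w)) ys = scale c (ad_args br x (\<lambda>w. f (a # w)) ys)"
    using symmetric_multider_scale[OF f] l by (simp add: ad_args_scale[symmetric] cong: ad_args_cong)
  then show "lie_deriv br x f (scale c a # ys) = scale c (lie_deriv br x f (a # ys))"
    using l by (simp add: lie_deriv_def ad_args_Cons symmetric_multider_scale[OF f]
        br_scale_right scale_right_distrib)
next
  fix a :: 'a and ys :: "'a list"
  assume l: "Suc (Suc (length ys)) = k"
  have "ad_args br x (\<lambda>w. f (a # a # w)) ys = 0"
    using symmetric_multider_repeat[OF f] l by (simp add: ad_args_zero cong: ad_args_cong)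
  then show "lie_deriv br x f (a # a # ys) = 0"
    using l symmetric_multider_swap[OF f, of ys "br x a" a]
    by (simp add: lie_deriv_def ad_args_Cons symmetric_multider_repeat[OF f])
qed (rule lie_deriv_Cons_mult[OF f])

lemma dCE_Cons_mult:
  assumes f: "symmetric_multider scale k f" and lk: "length ys = k"
  shows "dCE br f ((a * b) # ys) = a * dCE br f (b # ys) + b * dCE br f (a # ys)"
proof -
  have sym: "symmetric_on (length ys) f"
    using symmetric_multider_symmetric[OF f] lk by simp
  have "dCE br (\<lambda>w. f ((a * b) # w)) ys = dCE br (\<lambda>w. a * f (b # w) + b * f (a # w)) ys"
    using symmetric_multider_mult[OF f] lk by (intro dCE_cong) simp
  also have "\<dots> = a * dCE br (\<lambda>w. f (b # w)) ys + b * dCE br (\<lambda>w. f (a # w)) ys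
      + ((\<Sum>i<length ys. br (ys ! i) a * f (b # del_at i ys))
        + (\<Sum>i<length ys. br (ys ! i) b * f (a # del_at i ys)))"
    by (simp add: dCE_add dCE_mult add_ac)
  finally have d: "dCE br (\<lambda>w. f ((a * b) # w)) ys = \<dots>" .
  txt \<open>The terms produced by the Leibniz rule in the point and in the slots cancel.\<close>
  have "(\<Sum>i<length ys. br b (ys ! i) * f (ys[i := a]) + br a (ys ! i) * f (ys[i := b]))
      = (\<Sum>i<length ys. br (ys ! i) a * f (b # del_at i ys))
        + (\<Sum>i<length ys. br (ys ! i) b * f (a # del_at i ys))"
    by (simp add: sum.distrib[symmetric] symmetric_multider_update[OF f lk] lk
        br_commute[of _ "ys ! _"] add_ac)
  then show ?thesis
    by (simp add: dCE_Cons[OF sym] d lie_deriv_mult_point[OF f lk] distrib_left add_ac)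
qed

lemma symmetric_multider_dCE:
  assumes f: "symmetric_multider scale k f"
  shows "symmetric_multider scale (Suc k) (dCE br f)"
proof (rule symmetric_multiderI)
  show "symmetric_on (Suc k) (dCE br f)"
    by (rule symmetric_on_dCE[OF symmetric_multider_symmetric[OF f]])
next
  fix a b :: 'a and ys :: "'a list"
  assume l: "Suc (length ys) = Suc k"
  then have sym: "symmetric_on (length ys) f" and lk: "length ys = k"
    using symmetric_multider_symmetric[OF f] by simp_all
  have "dCE br (\<lambda>w. f ((a + b) # w)) ys = dCE br (\<lambda>w. f (a # w)) ys + dCE br (\<lambda>w. f (b # w)) ys"
    using symmetric_multider_add[OF f] lk by (simp add: dCE_add[symmetric] cong: dCE_cong)
  then show "dCE br f ((a + b) # ys) = dCE br f (a # ys) + dCE br f (b # ys)"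
    by (simp add: dCE_Cons[OF sym] lie_deriv_add_point[OF f lk] add_ac)
next
  fix c a and ys :: "'a list"
  assume l: "Suc (length ys) = Suc k"
  then have sym: "symmetric_on (length ys) f" and lk: "length ys = k"
    using symmetric_multider_symmetric[OF f] by simp_all
  have "dCE br (\<lambda>w. f (scale c a # w)) ys = scale c (dCE br (\<lambda>w. f (a # w)) ys)"
    using symmetric_multider_scale[OF f] lk by (simp add: dCE_scale[symmetric] cong: dCE_cong)
  then show "dCE br f (scale c a # ys) = scale c (dCE br f (a # ys))"
    by (simp add: dCE_Cons[OF sym] lie_deriv_scale_point[OF f lk] scale_right_distrib)
next
  fix a :: 'a and ys :: "'a list"
  assume l: "Suc (Suc (length ys)) = Suc k"
  have "dCE br (\<lambda>w. f (a # a # w)) ys = 0"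
    using symmetric_multider_repeat[OF f] l by (simp add: dCE_zero cong: dCE_cong)
  then show "dCE br f (a # a # ys) = 0"
    using symmetric_multider_zero[OF f, of ys] symmetric_multider_symmetric[OF f] l
    by (simp add: dCE_Cons_Cons br_alt)
qed (simp add: dCE_Cons_mult[OF f])

section \<open>The Chevalley--Eilenberg differential squares to zero\<close>

lemma ad_args_commutator:
  assumes f: "symmetric_multider scale k f" and l: "length zs = k"
  shows "ad_args br x (ad_args br y f) zs + ad_args br y (ad_args br x f) zs
    = ad_args br (br x y) f zs"
proof -
  let ?n = "length zs"
  have "ad_args br y (ad_args br x f) zs = (\<Sum>l<?n. \<Sum>k<?n.
     if k = l then f (zs[l := br x (br y (zs ! l))])
     else f (zs[l := br y (zs ! l), k := br x (zs ! k)]))"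
    by (rule ad_args_ad_args)
  also have "\<dots> = (\<Sum>k<?n. \<Sum>l<?n.
     if l = k then f (zs[k := br x (br y (zs ! k))])
     else f (zs[k := br x (zs ! k), l := br y (zs ! l)]))"
    by (subst sum.swap) (intro sum.cong refl, auto simp: list_update_swap)
  finally have "ad_args br x (ad_args br y f) zs + ad_args br y (ad_args br x f) zs
      = (\<Sum>k<?n. f (zs[k := br y (br x (zs ! k))]) + f (zs[k := br x (br y (zs ! k))]))"
    by (simp add: ad_args_ad_args[of br x y] sum.distrib[symmetric] if_distrib
        if_distribR sum.delta cong: if_cong)
  also have "\<dots> = (\<Sum>k<?n. f (zs[k := br (br x y) (zs ! k)]))"
    using l by (intro sum.cong refl)
      (simp add: symmetric_multider_add_slot[OF f, symmetric] br_br_left add.commute)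
  finally show ?thesis unfolding ad_args_def .
qed

lemma ad_args_ad_args_self: "ad_args br x (ad_args br x f) zs = ad_args br (sq x) f zs"
proof -
  have "ad_args br x (ad_args br x f) zs = (\<Sum>k<length zs. f (zs[k := br x (br x (zs ! k))]))"
    unfolding ad_args_ad_args
    by (subst sum_symmetric_square) (auto simp: list_update_swap)
  then show ?thesis unfolding ad_args_def by (simp add: sq_ad)
qed

lemma lie_deriv_commutator:
  assumes "symmetric_multider scale k f" "length zs = k"
  shows "lie_deriv br x (lie_deriv br y f) zs + lie_deriv br y (lie_deriv br x f) zs
    = lie_deriv br (br x y) f zs"
  using ad_args_commutator[OF assms, of x y]
  by (simp add: lie_deriv_def ad_args_add ad_args_br br_add_right br_br_left
      lie_deriv_def[abs_def] add_ac)

lemma lie_deriv_lie_deriv_self: "lie_deriv br x (lie_deriv br x f) zs = lie_deriv br (sq x) f zs"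
  by (simp add: lie_deriv_def[abs_def] ad_args_add ad_args_br ad_args_ad_args_self br_add_right sq_ad)

lemma lie_deriv_dCE_commute_Cons:
  assumes f: "symmetric_multider scale k f" and l: "length ys = k"
    and IH: "lie_deriv br x (dCE br (\<lambda>w. f (y # w))) ys = dCE br (lie_deriv br x (\<lambda>w. f (y # w))) ys"
  shows "lie_deriv br x (dCE br f) (y # ys) = dCE br (lie_deriv br x f) (y # ys)"
proof -
  have sym: "symmetric_on (length ys) f" using symmetric_multider_symmetric[OF f] l by simp
  have "dCE br (\<lambda>w. lie_deriv br x f (y # w)) ys
      = dCE br (lie_deriv br x (\<lambda>w. f (y # w))) ys + dCE br (\<lambda>w. f (br x y # w)) ys"
    by (simp add: lie_deriv_Cons dCE_add)
  then have rhs: "dCE br (lie_deriv br x f) (y # ys) = lie_deriv br y (lie_deriv br x f) ys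
      + dCE br (lie_deriv br x (\<lambda>w. f (y # w))) ys + dCE br (\<lambda>w. f (br x y # w)) ys"
    using dCE_Cons[OF symmetric_on_lie_deriv[OF sym]] by (simp add: add.assoc)
  have "ad_args br x (\<lambda>w. dCE br f (y # w)) ys
      = ad_args br x (lie_deriv br y f) ys + ad_args br x (dCE br (\<lambda>w. f (y # w))) ys"
    using symmetric_multider_symmetric[OF f] l
    by (simp add: dCE_Cons ad_args_add[symmetric] cong: ad_args_cong)
  then have lhs: "lie_deriv br x (dCE br f) (y # ys) = lie_deriv br x (lie_deriv br y f) ys
      + lie_deriv br x (dCE br (\<lambda>w. f (y # w))) ys + lie_deriv br (br x y) f ys
      + dCE br (\<lambda>w. f (br x y # w)) ys"
    by (simp add: lie_deriv_def ad_args_Cons dCE_Cons[OF sym] br_add_right add_ac)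
  show ?thesis
    unfolding lhs rhs IH lie_deriv_commutator[OF f l, symmetric] by (simp add: add_ac)
qed

lemma lie_deriv_dCE_commute:
  "symmetric_multider scale k f \<Longrightarrow> length zs = Suc k
    \<Longrightarrow> lie_deriv br x (dCE br f) zs = dCE br (lie_deriv br x f) zs"
proof (induction k arbitrary: f zs)
  case 0
  then obtain y where zs: "zs = [y]" by (cases zs) auto
  show ?case
    unfolding zs by (rule lie_deriv_dCE_commute_Cons[OF 0(1)]) (simp_all add: lie_deriv_def)
next
  case (Suc k)
  then obtain y ys where "zs = y # ys" and l: "length ys = Suc k" by (cases zs) auto
  with Suc show ?case
    by (metis lie_deriv_dCE_commute_Cons symmetric_multider_Cons)
qed

lemma dCE_dCE_Cons:
  assumes f: "symmetric_multider scale k f" and l: "length ys = Suc k"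
  shows "dCE br (dCE br f) (x # ys) = dCE br (dCE br (\<lambda>w. f (x # w))) ys"
proof -
  have "dCE br (\<lambda>w. dCE br f (x # w)) ys
      = dCE br (\<lambda>w. lie_deriv br x f w + dCE br (\<lambda>w. f (x # w)) w) ys"
    using symmetric_multider_symmetric[OF f] l by (intro dCE_cong) (simp add: dCE_Cons)
  then have "dCE br (\<lambda>w. dCE br f (x # w)) ys
      = dCE br (lie_deriv br x f) ys + dCE br (dCE br (\<lambda>w. f (x # w))) ys"
    by (simp add: dCE_add)
  moreover have "symmetric_on (length ys) (dCE br f)"
    using symmetric_on_dCE[OF symmetric_multider_symmetric[OF f]] l by simp
  ultimately show ?thesis
    using lie_deriv_dCE_commute[OF f l, of x] by (simp add: dCE_Cons)
qed

lemma dCE_dCE: "symmetric_multider scale k f \<Longrightarrow> length zs = Suc (Suc k) \<Longrightarrow> dCE br (dCE br f) zs = 0"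
proof (induction k arbitrary: f zs)
  case 0
  then obtain x y where "zs = [x, y]" by (metis length_0_conv length_Suc_conv)
  then show ?case using 0 by (simp add: dCE_dCE_Cons dCE_single)
next
  case (Suc k)
  then obtain x ys where "zs = x # ys" and "length ys = Suc (Suc k)" by (cases zs) auto
  with Suc show ?case by (simp add: dCE_dCE_Cons symmetric_multider_Cons)
qed

end

section \<open>The restricted component of the differential\<close>

definition quadratic_part ::
    "('a::comm_ring \<Rightarrow> 'a \<Rightarrow> 'a) \<Rightarrow> ('a \<Rightarrow> 'a) \<Rightarrow> ('a list \<Rightarrow> 'a) \<Rightarrow> 'a \<Rightarrow> 'a list \<Rightarrow> 'a" where
  "quadratic_part br sq \<phi> x w = lie_deriv br x (\<lambda>v. \<phi> (x # v)) w + \<phi> (sq x # w)"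

lemma delta1_eq_quadratic_part: "delta1 br sq \<psi> x zs = quadratic_part br sq \<psi> x []"
  by (simp add: delta1_def quadratic_part_def lie_deriv_def add.commute)

context restricted_poisson_algebra
begin

lemma deltaN_eq_quadratic_part:
  assumes "symmetric_on (Suc (length zs)) \<phi>"
  shows "deltaN br sq \<phi> \<omega> x zs = quadratic_part br sq \<phi> x zs + dCE br (\<omega> x) zs"
proof -
  have "(\<Sum>i<length zs. \<phi> (br x (zs ! i) # x # del_at i zs)) = ad_args br x (\<lambda>v. \<phi> (x # v)) zs"
    unfolding ad_args_def
    using symmetric_on_update[OF symmetric_on_Cons[OF assms]] symmetric_on_swap[OF assms]
    by (intro sum.cong refl) simp
  then show ?thesis
    unfolding deltaN_def quadratic_part_def by (simp add: lie_deriv_def dCE_def add_ac)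
qed

lemma quadratic_part_scale:
  assumes f: "symmetric_multider scale (Suc k) \<phi>" and l: "length w = k"
  shows "quadratic_part br sq \<phi> (scale c x) w = scale (c ^ 2) (quadratic_part br sq \<phi> x w)"
proof -
  have "lie_deriv br (scale c x) (\<lambda>v. \<phi> (scale c x # v)) w
      = lie_deriv br (scale c x) (\<lambda>v. scale c (\<phi> (x # v))) w"
    using symmetric_multider_scale[OF f] l by (intro lie_deriv_cong) simp
  also have "\<dots> = scale (c ^ 2) (lie_deriv br x (\<lambda>v. \<phi> (x # v)) w)"
    by (simp add: lie_deriv_scale lie_deriv_scale_point[OF symmetric_multider_Cons[OF f] l]
        power2_eq_square)
  finally show ?thesis
    using symmetric_multider_scale[OF f, of w "c ^ 2" "sq x"] l
    by (simp add: quadratic_part_def sq_scale scale_right_distrib)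
qed

lemma dCE_Cons_Cons_symmetric_multider:
  assumes f: "symmetric_multider scale (Suc k) \<phi>" and l: "length w = k"
  shows "dCE br \<phi> (x # y # w) + dCE br (\<lambda>v. \<phi> (x # y # v)) w
    = lie_deriv br x (\<lambda>v. \<phi> (y # v)) w + lie_deriv br y (\<lambda>v. \<phi> (x # v)) w + \<phi> (br x y # w)"
  using symmetric_multider_symmetric[OF f] l by (simp add: dCE_Cons_Cons lie_deriv_def add_ac)

lemma quadratic_part_add:
  assumes f: "symmetric_multider scale (Suc k) \<phi>" and l: "length w = k"
  shows "quadratic_part br sq \<phi> (x + y) w
    = quadratic_part br sq \<phi> x w + quadratic_part br sq \<phi> y w
      + (dCE br \<phi> (x # y # w) + dCE br (\<lambda>v. \<phi> (x # y # v)) w)"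
proof -
  have "lie_deriv br (x + y) (\<lambda>v. \<phi> ((x + y) # v)) w
      = lie_deriv br (x + y) (\<lambda>v. \<phi> (x # v) + \<phi> (y # v)) w"
    using symmetric_multider_add[OF f] l by (intro lie_deriv_cong) simp
  also have "\<dots> = lie_deriv br x (\<lambda>v. \<phi> (x # v)) w + lie_deriv br y (\<lambda>v. \<phi> (x # v)) w
      + (lie_deriv br x (\<lambda>v. \<phi> (y # v)) w + lie_deriv br y (\<lambda>v. \<phi> (y # v)) w)"
    by (simp add: lie_deriv_add lie_deriv_add_point[OF symmetric_multider_Cons[OF f] l])
  finally show ?thesis
    using l unfolding quadratic_part_def dCE_Cons_Cons_symmetric_multider[OF f l]
    by (simp add: sq_add symmetric_multider_add[OF f] add_ac)
qed

lemma symmetric_multider_Cons_update: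
  assumes f: "symmetric_multider scale (Suc k) \<phi>" and "length w = k" "i < k"
  shows "\<phi> (a # w[i := b]) = \<phi> (a # b # del_at i w)"
  using symmetric_on_update[OF symmetric_on_Cons[OF symmetric_multider_symmetric[OF f]]] assms
  by simp

lemma lie_deriv_mult_point_Cons:
  assumes f: "symmetric_multider scale (Suc k) \<phi>" and l: "length w = k" and u: "u = x \<or> u = y"
  shows "lie_deriv br (x * y) (\<lambda>v. \<phi> (u # v)) w
    = x * lie_deriv br y (\<lambda>v. \<phi> (u # v)) w + y * lie_deriv br x (\<lambda>v. \<phi> (u # v)) w
      + (\<Sum>i<length w. br u (w ! i) * \<phi> (x # y # del_at i w))"
proof -
  have "br y (w ! i) * \<phi> (u # w[i := x]) + br x (w ! i) * \<phi> (u # w[i := y])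
      = br u (w ! i) * \<phi> (x # y # del_at i w)" if "i < length w" for i
    using u symmetric_multider_Cons_update[OF f l] symmetric_multider_repeat[OF f]
      symmetric_multider_swap[OF f] that l
    by auto
  then show ?thesis
    using lie_deriv_mult_point[OF symmetric_multider_Cons[OF f] l, of x y] by simp
qed

lemma quadratic_part_mult:
  assumes f: "symmetric_multider scale (Suc k) \<phi>" and l: "length w = k"
  shows "quadratic_part br sq \<phi> (x * y) w
    = x * x * quadratic_part br sq \<phi> y w + y * y * quadratic_part br sq \<phi> x w
      + x * y * (dCE br \<phi> (x # y # w) + dCE br (\<lambda>v. \<phi> (x # y # v)) w)
      + (\<Sum>i<length w. br (w ! i) (x * y) * \<phi> (x # y # del_at i w))"
proof -
  let ?S = "\<lambda>u. \<Sum>i<length w. br u (w ! i) * \<phi> (x # y # del_at i w)"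
  note Lx = lie_deriv_mult_point_Cons[OF f l disjI1[OF refl]]
  note Ly = lie_deriv_mult_point_Cons[OF f l disjI2[OF refl]]
  have "lie_deriv br (x * y) (\<lambda>v. \<phi> ((x * y) # v)) w
      = lie_deriv br (x * y) (\<lambda>v. x * \<phi> (y # v) + y * \<phi> (x # v)) w"
    using symmetric_multider_mult[OF f] l by (intro lie_deriv_cong) simp
  also have "\<dots> = x * lie_deriv br (x * y) (\<lambda>v. \<phi> (y # v)) w + x * br y x * \<phi> (y # w)
      + (y * lie_deriv br (x * y) (\<lambda>v. \<phi> (x # v)) w + y * br x y * \<phi> (x # w))"
    by (simp add: lie_deriv_add lie_deriv_mult br_leibniz br_alt)
  finally have L: "lie_deriv br (x * y) (\<lambda>v. \<phi> ((x * y) # v)) w = \<dots>" .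
  have "\<phi> (x * x # w) = 0" "\<phi> (y * y # w) = 0"
    using symmetric_multider_mult[OF f, of w] l by simp_all
  then have Q: "\<phi> (sq (x * y) # w) = x * x * \<phi> (sq y # w) + y * y * \<phi> (sq x # w)
      + x * y * \<phi> (br x y # w) + br x y * (x * \<phi> (y # w) + y * \<phi> (x # w))"
    using l by (simp add: sq_mult symmetric_multider_add[OF f] symmetric_multider_mult[OF f]
        algebra_simps)
  have S: "(\<Sum>i<length w. br (w ! i) (x * y) * \<phi> (x # y # del_at i w)) = x * ?S y + y * ?S x"
    by (simp add: br_leibniz_right br_commute[of "w ! _"] sum.distrib sum_distrib_left
        algebra_simps)
  show ?thesis
    unfolding quadratic_part_def L Q S Lx Ly dCE_Cons_Cons_symmetric_multider[OF f l]
    by (simp add: algebra_simps br_commute[of y x])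
qed

lemma quadratic_part_dCE_commute:
  assumes f: "symmetric_multider scale (Suc k) \<phi>" and l: "length zs = Suc k"
  shows "quadratic_part br sq (dCE br \<phi>) x zs = dCE br (quadratic_part br sq \<phi> x) zs"
proof -
  have sym: "symmetric_on (length zs) \<phi>"
    using symmetric_multider_symmetric[OF f] l by simp
  have fx: "symmetric_multider scale k (\<lambda>v. \<phi> (x # v))" by (rule symmetric_multider_Cons[OF f])
  have "lie_deriv br x (\<lambda>v. dCE br \<phi> (x # v)) zs
      = lie_deriv br x (\<lambda>v. lie_deriv br x \<phi> v + dCE br (\<lambda>u. \<phi> (x # u)) v) zs"
    using symmetric_multider_symmetric[OF f] l by (intro lie_deriv_cong) (simp add: dCE_Cons)
  then have "quadratic_part br sq (dCE br \<phi>) x zs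
      = lie_deriv br (sq x) \<phi> zs + dCE br (lie_deriv br x (\<lambda>v. \<phi> (x # v))) zs
        + (lie_deriv br (sq x) \<phi> zs + dCE br (\<lambda>v. \<phi> (sq x # v)) zs)"
    by (simp add: quadratic_part_def lie_deriv_add lie_deriv_lie_deriv_self
        lie_deriv_dCE_commute[OF fx l] dCE_Cons[OF sym])
  also have "\<dots> = dCE br (quadratic_part br sq \<phi> x) zs"
    by (simp add: quadratic_part_def[abs_def] dCE_add add_ac)
  finally show ?thesis .
qed

lemma deltaN_dCE:
  assumes f: "symmetric_multider scale (Suc k) \<phi>" and l: "length zs = Suc k"
  shows "deltaN br sq (dCE br \<phi>) \<omega> x zs = dCE br (\<lambda>w. quadratic_part br sq \<phi> x w + \<omega> x w) zs"
proof -
  have "symmetric_on (Suc (length zs)) (dCE br \<phi>)"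
    using symmetric_on_dCE[OF symmetric_multider_symmetric[OF f]] l by simp
  then show ?thesis
    by (simp add: deltaN_eq_quadratic_part quadratic_part_dCE_commute[OF f l] dCE_add)
qed

section \<open>Restricted Poisson cochains\<close>

lemma PA_cochain_iff:
  "PA_cochain scale n (\<phi>, \<omega>) \<longleftrightarrow> symmetric_multider scale n \<phi>
     \<and> (\<forall>x. symmetric_multider scale (n - 2) (\<omega> x))
     \<and> (\<forall>c x z. length z = n - 2 \<longrightarrow> \<omega> (scale c x) z = scale (c ^ 2) (\<omega> x z))
     \<and> (\<forall>x y z. length z = n - 2 \<longrightarrow> \<omega> (x + y) z = \<omega> x z + \<omega> y z + \<phi> (x # y # z))
     \<and> (\<forall>x y z. length z = n - 2 \<longrightarrow>
          \<omega> (x * y) z = x * x * \<omega> y z + y * y * \<omega> x z + x * y * \<phi> (x # y # z))"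
  by (simp add: PA_cochain_def multiderivation_def[symmetric] multiderivation_iff_symmetric_multider)

lemma multiderivation_d0: "multiderivation scale 1 (d0 br a)"
  unfolding multiderivation_iff_symmetric_multider
  by (rule symmetric_multiderI) (simp_all add: symmetric_on_le_1 d0_def br_add_left br_scale_left br_leibniz)

lemma PA_cochain_d1:
  assumes "multiderivation scale 1 \<psi>"
  shows "PA_cochain scale 2 (d1 br sq \<psi>)"
proof -
  have f: "symmetric_multider scale (Suc 0) \<psi>"
    using assms by (simp add: multiderivation_iff_symmetric_multider)
  have "symmetric_multider scale 2 (dCE br \<psi>)"
    using symmetric_multider_dCE[OF f] by (simp add: numeral_2_eq_2)
  moreover have "symmetric_multider scale 0 g" for g :: "'a list \<Rightarrow> 'a"
    by (rule symmetric_multiderI) (simp_all add: symmetric_on_le_1)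
  ultimately show ?thesis
    unfolding d1_def PA_cochain_iff delta1_eq_quadratic_part
    using quadratic_part_scale[OF f] quadratic_part_add[OF f] quadratic_part_mult[OF f]
    by simp
qed

lemma symmetric_multider_deltaN:
  assumes f: "symmetric_multider scale (Suc (Suc k)) \<phi>" and fo: "symmetric_multider scale k (\<omega> x)"
  shows "symmetric_multider scale (Suc k) (deltaN br sq \<phi> \<omega> x)"
proof (rule symmetric_multider_cong)
  show "symmetric_multider scale (Suc k) (\<lambda>w. quadratic_part br sq \<phi> x w + dCE br (\<omega> x) w)"
    unfolding quadratic_part_def
    by (intro symmetric_multider_add_fun symmetric_multider_lie_deriv symmetric_multider_Cons
        symmetric_multider_dCE f fo)
qed (use symmetric_multider_symmetric[OF f] in \<open>simp add: deltaN_eq_quadratic_part\<close>)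

lemma deltaN_scale_point:
  assumes f: "symmetric_multider scale (Suc (Suc k)) \<phi>" and l: "length w = Suc k"
    and \<omega>: "\<And>z. length z = k \<Longrightarrow> \<omega> (scale c x) z = scale (c ^ 2) (\<omega> x z)"
  shows "deltaN br sq \<phi> \<omega> (scale c x) w = scale (c ^ 2) (deltaN br sq \<phi> \<omega> x w)"
proof -
  have "dCE br (\<omega> (scale c x)) w = scale (c ^ 2) (dCE br (\<omega> x) w)"
    using \<omega> l by (simp add: dCE_scale[symmetric] cong: dCE_cong)
  then show ?thesis
    using symmetric_multider_symmetric[OF f] l
    by (simp add: deltaN_eq_quadratic_part quadratic_part_scale[OF f] scale_right_distrib)
qed

lemma deltaN_add_point:
  assumes f: "symmetric_multider scale (Suc (Suc k)) \<phi>" and l: "length w = Suc k"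
    and \<omega>: "\<And>z. length z = k \<Longrightarrow> \<omega> (x + y) z = \<omega> x z + \<omega> y z + \<phi> (x # y # z)"
  shows "deltaN br sq \<phi> \<omega> (x + y) w
    = deltaN br sq \<phi> \<omega> x w + deltaN br sq \<phi> \<omega> y w + dCE br \<phi> (x # y # w)"
proof -
  have "dCE br (\<omega> (x + y)) w = dCE br (\<omega> x) w + dCE br (\<omega> y) w + dCE br (\<lambda>v. \<phi> (x # y # v)) w"
    using \<omega> l by (simp add: dCE_add[symmetric] cong: dCE_cong)
  then show ?thesis
    using symmetric_multider_symmetric[OF f] l
    by (simp add: deltaN_eq_quadratic_part quadratic_part_add[OF f] add_ac)
qed

lemma deltaN_mult_point:
  assumes f: "symmetric_multider scale (Suc (Suc k)) \<phi>" and l: "length w = Suc k"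
    and \<omega>: "\<And>z. length z = k \<Longrightarrow>
      \<omega> (x * y) z = x * x * \<omega> y z + y * y * \<omega> x z + x * y * \<phi> (x # y # z)"
  shows "deltaN br sq \<phi> \<omega> (x * y) w
    = x * x * deltaN br sq \<phi> \<omega> y w + y * y * deltaN br sq \<phi> \<omega> x w + x * y * dCE br \<phi> (x # y # w)"
proof -
  have "dCE br (\<omega> (x * y)) w
      = dCE br (\<lambda>v. x * x * \<omega> y v + y * y * \<omega> x v + x * y * \<phi> (x # y # v)) w"
    using \<omega> l by (intro dCE_cong) simp
  also have "\<dots> = x * x * dCE br (\<omega> y) w + y * y * dCE br (\<omega> x) w
      + x * y * dCE br (\<lambda>v. \<phi> (x # y # v)) w
      + (\<Sum>i<length w. br (w ! i) (x * y) * \<phi> (x # y # del_at i w))"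
    by (simp add: dCE_add dCE_mult br_leibniz_right sum.distrib add_ac)
  txt \<open>The last sum cancels the one in the quadratic part.\<close>
  finally show ?thesis
    using symmetric_multider_symmetric[OF f] l
    by (simp add: deltaN_eq_quadratic_part quadratic_part_mult[OF f] distrib_left add_ac)
qed

lemma PA_cochain_dPA:
  assumes n: "2 \<le> n" and c: "PA_cochain scale n c"
  shows "PA_cochain scale (Suc n) (dPA br sq c)"
proof -
  obtain \<phi> \<omega> where c_eq: "c = (\<phi>, \<omega>)" by (cases c)
  obtain k where n_eq: "n = Suc (Suc k)" using n by (metis add_2_eq_Suc le_Suc_ex)
  have "symmetric_multider scale (Suc (Suc k)) \<phi>"
    and "\<And>x. symmetric_multider scale k (\<omega> x)"
    and "\<And>c x z. length z = k \<Longrightarrow> \<omega> (scale c x) z = scale (c ^ 2) (\<omega> x z)"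
    and "\<And>x y z. length z = k \<Longrightarrow> \<omega> (x + y) z = \<omega> x z + \<omega> y z + \<phi> (x # y # z)"
    and "\<And>x y z. length z = k \<Longrightarrow>
      \<omega> (x * y) z = x * x * \<omega> y z + y * y * \<omega> x z + x * y * \<phi> (x # y # z)"
    using c unfolding c_eq PA_cochain_iff n_eq by simp_all
  then show ?thesis
    unfolding c_eq n_eq dPA_def PA_cochain_iff prod.case
    by (simp add: symmetric_multider_dCE symmetric_multider_deltaN deltaN_scale_point
        deltaN_add_point deltaN_mult_point)
qed

lemma d1_d0_eq_zero: "PA_is_zero 2 (d1 br sq (d0 br a))"
proof -
  have "dCE br (d0 br a) [p, q] = 0" for p q
    using symmetric_on_le_1[of 1 "d0 br a"]
    by (simp add: dCE_Cons lie_deriv_def ad_args_Cons dCE_single d0_def br_br_left add_ac)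
  then show ?thesis
    unfolding PA_is_zero_def d1_def
    by (auto simp: numeral_2_eq_2 length_Suc_conv delta1_def d0_def sq_ad)
qed

lemma dPA_d1_eq_zero:
  assumes "multiderivation scale 1 \<psi>"
  shows "PA_is_zero 3 (dPA br sq (d1 br sq \<psi>))"
proof -
  have f: "symmetric_multider scale (Suc 0) \<psi>"
    using assms by (simp add: multiderivation_iff_symmetric_multider)
  have "deltaN br sq (dCE br \<psi>) (delta1 br sq \<psi>) x zs = 0" if "length zs = 1" for x zs
    using that by (auto simp: length_Suc_conv deltaN_dCE[OF f] delta1_eq_quadratic_part dCE_single)
  then show ?thesis
    unfolding PA_is_zero_def d1_def dPA_def
    using dCE_dCE[OF f] by (simp add: numeral_3_eq_3)
qed

lemma dPA_dPA_eq_zero: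
  assumes n: "2 \<le> n" and c: "PA_cochain scale n c"
  shows "PA_is_zero (Suc (Suc n)) (dPA br sq (dPA br sq c))"
proof -
  obtain \<phi> \<omega> where c_eq: "c = (\<phi>, \<omega>)" by (cases c)
  obtain k where n_eq: "n = Suc (Suc k)" using n by (metis add_2_eq_Suc le_Suc_ex)
  have f: "symmetric_multider scale (Suc (Suc k)) \<phi>" and fo: "\<And>x. symmetric_multider scale k (\<omega> x)"
    using c unfolding c_eq PA_cochain_iff n_eq by simp_all
  have "deltaN br sq (dCE br \<phi>) (deltaN br sq \<phi> \<omega>) x zs = 0" if "length zs = Suc (Suc k)" for x zs
  proof -
    have "deltaN br sq (dCE br \<phi>) (deltaN br sq \<phi> \<omega>) x zs = dCE br (dCE br (\<omega> x)) zs"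
      using that symmetric_multider_symmetric[OF f]
      by (simp add: deltaN_dCE[OF f] deltaN_eq_quadratic_part cong: dCE_cong)
    then show ?thesis using dCE_dCE[OF fo] that by simp
  qed
  then show ?thesis
    unfolding c_eq dPA_def PA_is_zero_def n_eq prod.case
    using dCE_dCE[OF f] by simp
qed

end

theorem mainTheorem4:
  fixes scale :: "'k::field \<Rightarrow> 'a::comm_ring \<Rightarrow> 'a"
    and br :: "'a \<Rightarrow> 'a \<Rightarrow> 'a"
    and sq :: "'a \<Rightarrow> 'a"
  assumes "restricted_poisson_algebra scale br sq"
  shows "(\<forall>a. multiderivation scale 1 (d0 br a))
    \<and> (\<forall>\<psi>. multiderivation scale 1 \<psi> \<longrightarrow> PA_cochain scale 2 (d1 br sq \<psi>))
    \<and> (\<forall>n c. 2 \<le> n \<longrightarrow> PA_cochain scale n c \<longrightarrow> PA_cochain scale (Suc n) (dPA br sq c))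
    \<and> (\<forall>a. PA_is_zero 2 (d1 br sq (d0 br a)))
    \<and> (\<forall>\<psi>. multiderivation scale 1 \<psi> \<longrightarrow> PA_is_zero 3 (dPA br sq (d1 br sq \<psi>)))
    \<and> (\<forall>n c. 2 \<le> n \<longrightarrow> PA_cochain scale n c \<longrightarrow> PA_is_zero (Suc (Suc n)) (dPA br sq (dPA br sq c)))"
proof -
  interpret restricted_poisson_algebra scale br sq by (rule assms)
  show ?thesis
    using multiderivation_d0 PA_cochain_d1 PA_cochain_dPA d1_d0_eq_zero dPA_d1_eq_zero
      dPA_dPA_eq_zero by blast
qed

end
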